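(* Let $w$ be a weight with $w>0$ a.e., let $\sigma=w^{-1}$, and suppose $K:=\|M\|_{L^2(\sigma)\to L^2(\sigma)}<\infty$. Then for every $f\in L^2(w)$, $$\|Hf\|_{L^{2,\infty}(w)}\le 2\,\varphi_H(2K)\,\|f\|_{L^2(w)},$$ where $\|g\|_{L^{2,\infty}(w)}=\sup_{\alpha>0}\alpha\,\big(w\{x:|g(x)|>\alpha\}\big)^{1/2}$.
   Context: A weight is a non-negative locally integrable function on $\mathbb R$; $w(E)=\int_E w$. $Mf(x)=\sup_{I\ni x}\frac1{|I|}\int_I|f|$ over intervals $I\ni x$. $Hf(x)=\mathrm{P.V.}\int_{\mathbb R}\frac{f(y)}{x-y}\,dy$. $[v]_{A_1}=\|Mv/v\|_{L^\infty}$. For $t\ge1$, $\varphi_H(t)=\sup_{[v]_{A_1}\le t}\|H\|_{L^1(v)\to L^{1,\infty}(v)}$ (possibly $+\infty$), where $\|g\|_{L^{1,\infty}(v)}=\sup_{\alpha>0}\alpha\, v\{|g|>\alpha\}$. $L^2(\sigma)$ is the space with norm $(\int|f|^2\sigma)^{1/2}$. *)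

theory Defs
  imports "HOL-Analysis.Analysis"
begin

definition ennsqrt :: "ennreal \<Rightarrow> ennreal" where
  "ennsqrt x = (if x = top then top else ennreal (sqrt (enn2real x)))"

definition is_weight :: "(real \<Rightarrow> real) \<Rightarrow> bool" where
  "is_weight w \<longleftrightarrow> w \<in> borel_measurable lebesgue \<and> (\<forall>x. 0 \<le> w x) \<and>
     (\<forall>a b. set_integrable lebesgue {a..b} w)"

definition wmeas :: "(real \<Rightarrow> real) \<Rightarrow> real set \<Rightarrow> ennreal" where
  "wmeas w E = (\<integral>\<^sup>+ x \<in> E. ennreal (w x) \<partial>lebesgue)"

definition maxf :: "(real \<Rightarrow> real) \<Rightarrow> real \<Rightarrow> ennreal" where
  "maxf f x = (SUP I \<in> {(a, b). a < b \<and> a \<le> x \<and> x \<le> b}.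
      ennreal (1 / (snd I - fst I)) * (\<integral>\<^sup>+ y \<in> {fst I..snd I}. ennreal \<bar>f y\<bar> \<partial>lebesgue))"

definition hilbert :: "(real \<Rightarrow> real) \<Rightarrow> real \<Rightarrow> real" where
  "hilbert f x = Lim (at_right 0)
     (\<lambda>\<epsilon>. \<integral> y. indicator {y. \<epsilon> < \<bar>x - y\<bar>} y * (f y / (x - y)) \<partial>lebesgue)"

definition A1_const :: "(real \<Rightarrow> real) \<Rightarrow> ennreal" where
  "A1_const v = Inf {C. AE x in lebesgue. maxf v x \<le> C * ennreal (v x)}"

definition L1_norm :: "(real \<Rightarrow> real) \<Rightarrow> (real \<Rightarrow> real) \<Rightarrow> ennreal" where
  "L1_norm v f = (\<integral>\<^sup>+ x. ennreal (\<bar>f x\<bar> * v x) \<partial>lebesgue)"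

definition L2_norm :: "(real \<Rightarrow> real) \<Rightarrow> (real \<Rightarrow> real) \<Rightarrow> ennreal" where
  "L2_norm v f = ennsqrt (\<integral>\<^sup>+ x. ennreal ((f x)\<^sup>2 * v x) \<partial>lebesgue)"

definition weak_L1_norm :: "(real \<Rightarrow> real) \<Rightarrow> (real \<Rightarrow> real) \<Rightarrow> ennreal" where
  "weak_L1_norm v g = (SUP \<alpha> \<in> {0<..}. ennreal \<alpha> * wmeas v {x. \<bar>g x\<bar> > \<alpha>})"

definition weak_L2_norm :: "(real \<Rightarrow> real) \<Rightarrow> (real \<Rightarrow> real) \<Rightarrow> ennreal" where
  "weak_L2_norm v g = (SUP \<alpha> \<in> {0<..}. ennreal \<alpha> * ennsqrt (wmeas v {x. \<bar>g x\<bar> > \<alpha>}))"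

definition H_weak11_norm :: "(real \<Rightarrow> real) \<Rightarrow> ennreal" where
  "H_weak11_norm v = Inf {C. \<forall>f. f \<in> borel_measurable lebesgue \<and> L1_norm v f < top \<longrightarrow>
       weak_L1_norm v (hilbert f) \<le> C * L1_norm v f}"

definition phi_H :: "real \<Rightarrow> ennreal" where
  "phi_H t = (SUP v \<in> {v. is_weight v \<and> A1_const v \<le> ennreal t}. H_weak11_norm v)"

definition M_L2_norm :: "(real \<Rightarrow> real) \<Rightarrow> ennreal" where
  "M_L2_norm \<sigma> = Inf {C. \<forall>f. f \<in> borel_measurable lebesgue \<and> L2_norm \<sigma> f < top \<longrightarrow>
       ennsqrt (\<integral>\<^sup>+ x. (maxf f x)\<^sup>2 * ennreal (\<sigma> x) \<partial>lebesgue) \<le> C * L2_norm \<sigma> f}"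

end

theory Submission
  imports Defs
begin

text \<open>
  Rubio de Francia's extrapolation argument. Fix \<alpha> > 0 and a set G of finite w-measure on which
  |Hf| > \<alpha>, and put u = w 1_G, so that the square of the L^2(\<sigma>) norm of u is w(G). The Rubio de
  Francia iteration Ru = \<Sum>_k M^k u / (2K)^k converges in L^2(\<sigma>), dominates u and satisfies
  M(Ru) \<le> 2K Ru, so v = Ru is an A_1 weight with [v]_A_1 \<le> 2K. Cauchy--Schwarz in the pairing of
  L^2(w) with L^2(\<sigma>) gives |f|_L^1(v) \<le> 2 |f|_L^2(w) w(G)^(1/2), and the weak (1,1) bound for H
  on L^1(v) then gives
    \<alpha> w(G) \<le> \<alpha> v(G) \<le> \<phi>_H(2K) |f|_L^1(v) \<le> 2 \<phi>_H(2K) |f|_L^2(w) w(G)^(1/2).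
  Dividing by w(G)^(1/2) bounds \<alpha> w(G)^(1/2); inner regularity of w passes from such G to the
  whole level set {|Hf| > \<alpha>}.
\<close>

section \<open>Arithmetic in [0,\<infinity>]\<close>

lemma ennsqrt_0[simp]: "ennsqrt 0 = 0"
  by (simp add: ennsqrt_def)

lemma ennsqrt_ennreal: "0 \<le> r \<Longrightarrow> ennsqrt (ennreal r) = ennreal (sqrt r)"
  by (simp add: ennsqrt_def)

lemma ennsqrt_less_top_iff[simp]: "ennsqrt x < top \<longleftrightarrow> x < top"
  by (cases x) (auto simp: ennsqrt_def)

lemma ennsqrt_mult_self: "ennsqrt x * ennsqrt x = x"
  by (cases x) (auto simp: ennsqrt_def ennreal_mult[symmetric] simp del: ennreal_mult)

lemma ennsqrt_sq: "ennsqrt x ^ 2 = x"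
  by (simp add: power2_eq_square ennsqrt_mult_self)

lemma ennsqrt_mono: "x \<le> y \<Longrightarrow> ennsqrt x \<le> ennsqrt y"
  by (cases x; cases y) (auto simp: ennsqrt_def top_unique)

lemma ennsqrt_of_sq: "ennsqrt (x ^ 2) = x"
proof (cases x)
  case (real r) then show ?thesis by (simp add: ennreal_power ennsqrt_ennreal)
qed (simp add: ennsqrt_def)

lemma ennsqrt_mult: "ennsqrt (x * y) = ennsqrt x * ennsqrt y"
  by (metis ennsqrt_of_sq ennsqrt_sq power_mult_distrib)

lemma ennsqrt_le_iff_sq: "ennsqrt x \<le> y \<longleftrightarrow> x \<le> y ^ 2"
  by (metis ennsqrt_mono ennsqrt_of_sq ennsqrt_sq power_mono zero_le)

lemma ennreal_mult_le_iff_le_divide: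
  "0 < a \<Longrightarrow> ennreal a * x \<le> y \<longleftrightarrow> x \<le> y / ennreal a"
  by (metis divide_right_mono_ennreal ennreal_eq_0_iff ennreal_mult_divide_eq ennreal_times_divide
      mult.commute not_le ennreal_neq_top order.refl order_trans ennreal_mult_le_mult_iff)

lemma ennreal_mult_ennsqrt_le:
  fixes a B Q :: ennreal
  assumes "a * Q \<le> B * ennsqrt Q" and "Q < top"
  shows "a * ennsqrt Q \<le> B"
proof (cases "Q = 0")
  case False
  then have "ennsqrt Q \<noteq> 0" by (metis ennsqrt_mult_self mult_zero_left)
  moreover have "ennsqrt Q \<noteq> top" using assms(2) by (simp add: top.not_eq_extremum)
  moreover have "ennsqrt Q * (a * ennsqrt Q) \<le> ennsqrt Q * B"
    using assms(1) by (metis ennsqrt_mult_self mult.assoc mult.commute)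
  ultimately show ?thesis by (simp add: ennreal_mult_le_mult_iff)
qed simp

lemma le_Inf_mult_right:
  fixes S :: "ennreal set"
  assumes S: "Inf S < top" and L: "L < top" and H: "\<And>C. C \<in> S \<Longrightarrow> X \<le> C * L"
  shows "X \<le> Inf S * L"
proof (cases "L = 0")
  case True
  from S obtain C where "C \<in> S" by (metis Inf_less_iff)
  with H True show ?thesis by auto
next
  case False
  from L False obtain l where l: "L = ennreal l" "0 < l" by (cases L) (auto simp: ennreal_eq_0_iff)
  show ?thesis
  proof (rule ennreal_le_epsilon)
    fix e :: real assume e: "0 < e"
    have "Inf S < Inf S + ennreal (e / l)"
      using S e l by (cases "Inf S") (auto simp: ennreal_plus[symmetric] ennreal_less_iff simp del: ennreal_plus)
    then obtain C where C: "C \<in> S" "C < Inf S + ennreal (e / l)" by (metis Inf_less_iff)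
    have "X \<le> C * L" using H C by auto
    also have "\<dots> \<le> (Inf S + ennreal (e / l)) * L" using C by (intro mult_right_mono) auto
    also have "\<dots> = Inf S * L + ennreal e"
      using l e by (simp add: distrib_right ennreal_mult[symmetric] del: ennreal_mult)
    finally show "X \<le> Inf S * L + ennreal e" .
  qed
qed

lemma suminf_geometric_half_ennreal: "(\<Sum>k. ennreal ((1/2)^k)) = 2"
proof -
  have "(\<lambda>k. (1/2::real)^k) sums (1 / (1 - 1/2))" by (rule geometric_sums) simp
  then show ?thesis by (subst suminf_ennreal_eq) auto
qed

section \<open>The maximal function of [0,\<infinity>]-valued functions\<close>

text \<open>Unlike maxf, this version can be iterated.\<close>

definition maxf_nn :: "(real \<Rightarrow> ennreal) \<Rightarrow> real \<Rightarrow> ennreal" where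
  "maxf_nn g x = (SUP I \<in> {(a, b). a < b \<and> a \<le> x \<and> x \<le> b}.
      ennreal (1 / (snd I - fst I)) * (\<integral>\<^sup>+ y \<in> {fst I..snd I}. g y \<partial>lebesgue))"

lemma borel_measurable_indicator_Icc[measurable]: "indicator {a..b::real} \<in> borel_measurable lebesgue"
  by (rule borel_measurable_indicator) simp

lemma maxf_eq_maxf_nn: "maxf f = maxf_nn (\<lambda>y. ennreal \<bar>f y\<bar>)"
  unfolding maxf_def maxf_nn_def by (rule ext) simp

lemma maxf_nn_cong_AE: "AE y in lebesgue. g y = h y \<Longrightarrow> maxf_nn g = maxf_nn h"
  unfolding maxf_nn_def by (intro ext SUP_cong arg_cong2[where f = "(*)"] refl nn_integral_cong_AE) auto

lemma average_le_maxf_nn: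
  assumes "a < b" "a \<le> x" "x \<le> b"
  shows "ennreal (1 / (b - a)) * (\<integral>\<^sup>+ y \<in> {a..b}. g y \<partial>lebesgue) \<le> maxf_nn g x"
  unfolding maxf_nn_def by (rule SUP_upper2[of "(a, b)"]) (use assms in auto)

lemma maxf_nn_suminf_le:
  assumes [measurable]: "\<And>k. g k \<in> borel_measurable lebesgue"
  shows "maxf_nn (\<lambda>y. \<Sum>k. g k y) x \<le> (\<Sum>k. maxf_nn (g k) x)"
  unfolding maxf_nn_def[of "\<lambda>y. \<Sum>k. g k y"]
proof (rule SUP_least, clarsimp)
  fix a b :: real assume ab: "a < b" "a \<le> x" "x \<le> b"
  have "(\<integral>\<^sup>+ y \<in> {a..b}. (\<Sum>k. g k y) \<partial>lebesgue) = (\<Sum>k. \<integral>\<^sup>+ y \<in> {a..b}. g k y \<partial>lebesgue)"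
    by (subst nn_integral_suminf[symmetric])
      (auto simp: ennreal_suminf_multc intro!: borel_measurable_times_ennreal borel_measurable_indicator)
  then have "ennreal (1 / (b - a)) * (\<integral>\<^sup>+ y \<in> {a..b}. (\<Sum>k. g k y) \<partial>lebesgue)
     = (\<Sum>k. ennreal (1 / (b - a)) * (\<integral>\<^sup>+ y \<in> {a..b}. g k y \<partial>lebesgue))"
    by simp
  also have "\<dots> \<le> (\<Sum>k. maxf_nn (g k) x)"
    using ab by (intro suminf_le) (auto intro!: average_le_maxf_nn)
  finally show "ennreal (1 / (b - a)) * (\<integral>\<^sup>+ y \<in> {a..b}. (\<Sum>k. g k y) \<partial>lebesgue) \<le> (\<Sum>k. maxf_nn (g k) x)" .
qed

lemma maxf_nn_cmult:
  assumes [measurable]: "g \<in> borel_measurable lebesgue"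
  shows "maxf_nn (\<lambda>y. c * g y) x = c * maxf_nn g x"
proof -
  have "\<And>A. A \<in> sets lebesgue \<Longrightarrow> (\<integral>\<^sup>+ y \<in> A. c * g y \<partial>lebesgue) = c * (\<integral>\<^sup>+ y \<in> A. g y \<partial>lebesgue)"
    by (simp add: mult.assoc nn_integral_cmult)
  then show ?thesis
    unfolding maxf_nn_def SUP_mult_left_ennreal
    by (intro SUP_cong refl) (auto simp: mult.left_commute)
qed

lemma average_gt_enlarge:
  assumes ab: "a < b" and t: "t < ennreal (1 / (b - a)) * A"
  obtains d where "d > 0" "t < ennreal (1 / (b - a + 2 * d)) * A"
proof (cases "A = top")
  case True
  have "t < top" using t top_greatest order.strict_trans2 by blast
  with True ab show ?thesis by (intro that[of 1]) (auto simp: ennreal_mult_top)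
next
  case False
  have "((\<lambda>d. ennreal (1 / (b - a + 2 * d)) * A) \<longlongrightarrow> ennreal (1 / (b - a + 2 * 0)) * A) (at_right 0)"
    using ab False by (intro tendsto_intros tendsto_ennrealI) (auto intro!: tendsto_intros)
  then have "eventually (\<lambda>d. t < ennreal (1 / (b - a + 2 * d)) * A) (at_right 0)"
    using t by (auto dest: order_tendstoD(1))
  then obtain d0 where d0: "d0 > 0" "\<And>d. 0 < d \<Longrightarrow> d < d0 \<Longrightarrow> t < ennreal (1 / (b - a + 2 * d)) * A"
    unfolding eventually_at_right_field by auto
  show ?thesis using d0(2)[of "d0/2"] d0(1) by (intro that[of "d0/2"]) simp_all
qed

lemma open_maxf_nn_superlevel: "open {x. t < maxf_nn g x}"
proof (rule openI)
  fix x0 assume "x0 \<in> {x. t < maxf_nn g x}"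
  then obtain a b where ab: "a < b" "a \<le> x0" "x0 \<le> b"
    and avg: "t < ennreal (1 / (b - a)) * (\<integral>\<^sup>+ y \<in> {a..b}. g y \<partial>lebesgue)"
    unfolding maxf_nn_def less_SUP_iff by auto
  obtain d where d: "d > 0" "t < ennreal (1 / (b - a + 2 * d)) * (\<integral>\<^sup>+ y \<in> {a..b}. g y \<partial>lebesgue)"
    using average_gt_enlarge[OF ab(1) avg] by blast
  show "\<exists>e>0. ball x0 e \<subseteq> {x. t < maxf_nn g x}"
  proof (intro exI[of _ d] conjI subsetI)
    fix y assume "y \<in> ball x0 d"
    then have y: "a - d \<le> y" "y \<le> b + d" using ab by (auto simp: dist_real_def)
    have "(\<integral>\<^sup>+ z \<in> {a..b}. g z \<partial>lebesgue) \<le> (\<integral>\<^sup>+ z \<in> {a-d..b+d}. g z \<partial>lebesgue)"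
      using d(1) by (intro nn_integral_mono) (auto simp: indicator_def)
    moreover have "b - a + 2 * d = (b + d) - (a - d)" by simp
    ultimately have "ennreal (1 / (b - a + 2 * d)) * (\<integral>\<^sup>+ y \<in> {a..b}. g y \<partial>lebesgue)
        \<le> ennreal (1 / ((b + d) - (a - d))) * (\<integral>\<^sup>+ z \<in> {a-d..b+d}. g z \<partial>lebesgue)"
      by (metis mult_left_mono zero_le)
    also have "\<dots> \<le> maxf_nn g y" using y ab d(1) by (intro average_le_maxf_nn) auto
    finally show "y \<in> {x. t < maxf_nn g x}" using d(2) by simp
  qed (use d in auto)
qed

lemma borel_measurable_maxf_nn[measurable]: "maxf_nn g \<in> borel_measurable lebesgue"
  by (rule borel_measurableI_greater) (use open_maxf_nn_superlevel in auto)

lemma borel_measurable_maxf_nn_iterate: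
  "u \<in> borel_measurable lebesgue \<Longrightarrow> (maxf_nn ^^ k) u \<in> borel_measurable lebesgue"
  by (cases k) simp_all

section \<open>Weighted norms and operator norms\<close>

lemma maxf_L2_le_M_L2_norm:
  assumes "M_L2_norm \<sigma> < top" and "f \<in> borel_measurable lebesgue" and "L2_norm \<sigma> f < top"
  shows "ennsqrt (\<integral>\<^sup>+ x. (maxf f x)\<^sup>2 * ennreal (\<sigma> x) \<partial>lebesgue) \<le> M_L2_norm \<sigma> * L2_norm \<sigma> f"
  using assms unfolding M_L2_norm_def by (intro le_Inf_mult_right) auto

lemma weak_L1_norm_hilbert_le:
  assumes "H_weak11_norm v < top" and "f \<in> borel_measurable lebesgue" and "L1_norm v f < top"
  shows "weak_L1_norm v (hilbert f) \<le> H_weak11_norm v * L1_norm v f"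
  using assms unfolding H_weak11_norm_def by (intro le_Inf_mult_right) auto

lemma H_weak11_norm_le_phi_H:
  "is_weight v \<Longrightarrow> A1_const v \<le> ennreal t \<Longrightarrow> H_weak11_norm v \<le> phi_H t"
  unfolding phi_H_def by (rule SUP_upper) simp

lemma L2_norm_indicator: "(\<And>x. 0 \<le> w x) \<Longrightarrow> L2_norm w (indicator A) = ennsqrt (wmeas w A)"
  unfolding L2_norm_def wmeas_def by (intro arg_cong[where f = ennsqrt] nn_integral_cong) (auto simp: indicator_def)

lemma wmeas_Icc_less_top:
  assumes "is_weight w" shows "wmeas w {a..b} < top"
proof -
  have "integrable lebesgue (\<lambda>x. indicator {a..b} x *\<^sub>R w x)"
    using assms by (simp add: is_weight_def set_integrable_def)
  moreover have "ennreal (norm (indicator {a..b} x *\<^sub>R w x)) = ennreal (w x) * indicator {a..b} x" for x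
    using assms by (auto simp: is_weight_def indicator_def)
  ultimately show ?thesis unfolding wmeas_def by (simp add: integrable_iff_bounded)
qed

lemma AE_eq_0_of_L2_norm_eq_0:
  assumes "w \<in> borel_measurable lebesgue" "AE x in lebesgue. 0 < w x"
    and "f \<in> borel_measurable lebesgue" and "L2_norm w f = 0"
  shows "AE x in lebesgue. f x = 0"
proof -
  have "(\<integral>\<^sup>+ x. ennreal ((f x)\<^sup>2 * w x) \<partial>lebesgue) = 0"
    using assms(4) unfolding L2_norm_def by (metis ennsqrt_mult_self mult_zero_left)
  then have "AE x in lebesgue. ennreal ((f x)\<^sup>2 * w x) = 0"
    using assms(1,3) by (subst (asm) nn_integral_0_iff_AE) auto
  with assms(2) show ?thesis by eventually_elim (auto simp: ennreal_eq_0_iff mult_le_0_iff)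
qed

lemma hilbert_AE_zero: "AE y in lebesgue. f y = 0 \<Longrightarrow> hilbert f x = 0"
proof -
  assume f: "AE y in lebesgue. f y = 0"
  have "(\<integral> y. indicator {y. e < \<bar>x - y\<bar>} y * (f y / (x - y)) \<partial>lebesgue) = 0" for e
    by (rule integral_eq_zero_AE) (use f in eventually_elim, auto)
  then show ?thesis unfolding hilbert_def by (simp add: tendsto_Lim)
qed

lemma nn_integral_abs_mult_le_L2_norm:
  fixes w f :: "real \<Rightarrow> real" and h :: "real \<Rightarrow> ennreal"
  assumes [measurable]: "w \<in> borel_measurable lebesgue" "f \<in> borel_measurable lebesgue" "h \<in> borel_measurable lebesgue"
    and w0: "\<And>x. 0 \<le> w x" and wpos: "AE x in lebesgue. 0 < w x"
  shows "(\<integral>\<^sup>+ x. ennreal \<bar>f x\<bar> * h x \<partial>lebesgue)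
     \<le> L2_norm w f * ennsqrt (\<integral>\<^sup>+ x. h x ^ 2 * ennreal (inverse (w x)) \<partial>lebesgue)"
proof -
  define a where "a x = ennreal (\<bar>f x\<bar> * sqrt (w x))" for x
  define b where "b x = h x * ennreal (sqrt (inverse (w x)))" for x
  have [measurable]: "a \<in> borel_measurable lebesgue" "b \<in> borel_measurable lebesgue"
    unfolding a_def b_def by measurable
  have ab: "AE x in lebesgue. a x * b x = ennreal \<bar>f x\<bar> * h x"
    using wpos
  proof eventually_elim
    case (elim x)
    then have "ennreal (sqrt (w x)) * ennreal (sqrt (inverse (w x))) = 1"
      by (simp add: ennreal_mult'[symmetric] real_sqrt_mult[symmetric])
    then show ?case unfolding a_def b_def using w0[of x]
      by (simp add: ennreal_mult ac_simps)
  qed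
  have a2: "a x ^ 2 = ennreal ((f x)\<^sup>2 * w x)" and b2: "b x ^ 2 = h x ^ 2 * ennreal (inverse (w x))" for x
    unfolding a_def b_def using w0[of x] by (simp_all add: ennreal_power power_mult_distrib)
  have "(\<integral>\<^sup>+ x. a x * b x \<partial>lebesgue)\<^sup>2 \<le> (\<integral>\<^sup>+ x. a x ^ 2 \<partial>lebesgue) * (\<integral>\<^sup>+ x. b x ^ 2 \<partial>lebesgue)"
    by (rule Cauchy_Schwarz_nn_integral) auto
  then have "(\<integral>\<^sup>+ x. a x * b x \<partial>lebesgue) \<le> ennsqrt ((\<integral>\<^sup>+ x. a x ^ 2 \<partial>lebesgue) * (\<integral>\<^sup>+ x. b x ^ 2 \<partial>lebesgue))"
    by (metis ennsqrt_mono ennsqrt_of_sq)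
  then show ?thesis
    unfolding ennsqrt_mult L2_norm_def a2 b2 by (simp add: nn_integral_cong_AE[OF ab])
qed

lemma maxf_nn_L2_le:
  fixes \<sigma> :: "real \<Rightarrow> real" and g :: "real \<Rightarrow> ennreal"
  assumes MK: "M_L2_norm \<sigma> = ennreal K"
    and [measurable]: "\<sigma> \<in> borel_measurable lebesgue" and \<sigma>: "AE x in lebesgue. 0 < \<sigma> x"
    and [measurable]: "g \<in> borel_measurable lebesgue"
    and Q: "(\<integral>\<^sup>+ x. g x ^ 2 * ennreal (\<sigma> x) \<partial>lebesgue) < top"
  shows "(\<integral>\<^sup>+ x. maxf_nn g x ^ 2 * ennreal (\<sigma> x) \<partial>lebesgue)
           \<le> ennreal K ^ 2 * (\<integral>\<^sup>+ x. g x ^ 2 * ennreal (\<sigma> x) \<partial>lebesgue)"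
proof -
  define f where "f x = enn2real (g x)" for x
  have [measurable]: "f \<in> borel_measurable lebesgue" unfolding f_def by measurable
  have "AE x in lebesgue. g x ^ 2 * ennreal (\<sigma> x) \<noteq> top"
    using Q nn_integral_PInf_AE[of "\<lambda>x. g x ^ 2 * ennreal (\<sigma> x)" lebesgue] by auto
  with \<sigma> have g_fin: "AE x in lebesgue. g x \<noteq> top"
    by eventually_elim (auto simp: ennreal_mult_eq_top_iff)
  with \<sigma> have "AE x in lebesgue. ennreal ((f x)\<^sup>2 * \<sigma> x) = g x ^ 2 * ennreal (\<sigma> x)"
  proof eventually_elim
    case (elim x)
    then show ?case by (cases "g x") (auto simp: f_def ennreal_mult ennreal_power)
  qed
  then have L2: "L2_norm \<sigma> f = ennsqrt (\<integral>\<^sup>+ x. g x ^ 2 * ennreal (\<sigma> x) \<partial>lebesgue)"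
    unfolding L2_norm_def by (simp add: nn_integral_cong_AE)
  have "maxf f = maxf_nn g"
    unfolding maxf_eq_maxf_nn by (rule maxf_nn_cong_AE) (use g_fin in \<open>eventually_elim, auto simp: f_def less_top\<close>)
  with maxf_L2_le_M_L2_norm[of \<sigma> f] MK L2 Q
  have "ennsqrt (\<integral>\<^sup>+ x. maxf_nn g x ^ 2 * ennreal (\<sigma> x) \<partial>lebesgue)
      \<le> ennreal K * ennsqrt (\<integral>\<^sup>+ x. g x ^ 2 * ennreal (\<sigma> x) \<partial>lebesgue)"
    by simp
  then show ?thesis by (simp add: ennsqrt_le_iff_sq power_mult_distrib ennsqrt_sq)
qed

lemma maxf_nn_iterate_L2_le:
  fixes \<sigma> :: "real \<Rightarrow> real" and g :: "real \<Rightarrow> ennreal"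
  assumes MK: "M_L2_norm \<sigma> = ennreal K"
    and [measurable]: "\<sigma> \<in> borel_measurable lebesgue" and \<sigma>: "AE x in lebesgue. 0 < \<sigma> x"
    and [measurable]: "g \<in> borel_measurable lebesgue"
    and Q: "(\<integral>\<^sup>+ x. g x ^ 2 * ennreal (\<sigma> x) \<partial>lebesgue) < top"
  shows "(\<integral>\<^sup>+ x. (maxf_nn ^^ k) g x ^ 2 * ennreal (\<sigma> x) \<partial>lebesgue)
           \<le> ennreal K ^ (2 * k) * (\<integral>\<^sup>+ x. g x ^ 2 * ennreal (\<sigma> x) \<partial>lebesgue)"
proof (induction k)
  case (Suc k)
  have "ennreal K ^ (2 * k) * (\<integral>\<^sup>+ x. g x ^ 2 * ennreal (\<sigma> x) \<partial>lebesgue) < top"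
    using Q by (simp add: ennreal_mult_less_top power_less_top_ennreal)
  with Suc have "(\<integral>\<^sup>+ x. (maxf_nn ^^ k) g x ^ 2 * ennreal (\<sigma> x) \<partial>lebesgue) < top"
    by (rule le_less_trans)
  then have "(\<integral>\<^sup>+ x. (maxf_nn ^^ Suc k) g x ^ 2 * ennreal (\<sigma> x) \<partial>lebesgue)
      \<le> ennreal K ^ 2 * (\<integral>\<^sup>+ x. (maxf_nn ^^ k) g x ^ 2 * ennreal (\<sigma> x) \<partial>lebesgue)"
    using MK \<sigma> borel_measurable_maxf_nn_iterate by (simp add: maxf_nn_L2_le)
  also have "\<dots> \<le> ennreal K ^ 2 * (ennreal K ^ (2 * k) * (\<integral>\<^sup>+ x. g x ^ 2 * ennreal (\<sigma> x) \<partial>lebesgue))"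
    by (intro mult_left_mono Suc) auto
  also have "\<dots> = ennreal K ^ (2 * Suc k) * (\<integral>\<^sup>+ x. g x ^ 2 * ennreal (\<sigma> x) \<partial>lebesgue)"
    by (simp only: mult_Suc_right power_add mult.assoc)
  finally show ?case .
qed simp

section \<open>The Rubio de Francia algorithm\<close>

definition rubio_de_francia :: "real \<Rightarrow> (real \<Rightarrow> ennreal) \<Rightarrow> real \<Rightarrow> ennreal" where
  "rubio_de_francia c u x = (\<Sum>k. ennreal ((1 / c) ^ k) * (maxf_nn ^^ k) u x)"

lemma borel_measurable_rubio_de_francia:
  assumes "u \<in> borel_measurable lebesgue" shows "rubio_de_francia c u \<in> borel_measurable lebesgue"
  unfolding rubio_de_francia_def[abs_def] using borel_measurable_maxf_nn_iterate[OF assms] by measurable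

lemma le_rubio_de_francia: "u x \<le> rubio_de_francia c u x"
  unfolding rubio_de_francia_def using sum_le_suminf[of "\<lambda>k. ennreal ((1 / c) ^ k) * (maxf_nn ^^ k) u x" "{0}"]
  by simp

lemma maxf_nn_rubio_de_francia_le:
  assumes "u \<in> borel_measurable lebesgue"
  shows "maxf_nn (rubio_de_francia c u) x \<le> (\<Sum>k. ennreal ((1 / c) ^ k) * (maxf_nn ^^ Suc k) u x)"
proof -
  have "maxf_nn (rubio_de_francia c u) x \<le> (\<Sum>k. maxf_nn (\<lambda>y. ennreal ((1 / c) ^ k) * (maxf_nn ^^ k) u y) x)"
    unfolding rubio_de_francia_def[abs_def]
    by (rule maxf_nn_suminf_le) (use borel_measurable_maxf_nn_iterate[OF assms] in measurable)
  also have "\<dots> = (\<Sum>k. ennreal ((1 / c) ^ k) * (maxf_nn ^^ Suc k) u x)"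
    using borel_measurable_maxf_nn_iterate[OF assms] by (simp add: maxf_nn_cmult)
  finally show ?thesis .
qed

lemma rubio_de_francia_tail_le:
  assumes "0 < c"
  shows "(\<Sum>k. ennreal ((1 / c) ^ k) * (maxf_nn ^^ Suc k) u x) \<le> ennreal c * rubio_de_francia c u x"
proof -
  define a where "a k = ennreal ((1 / c) ^ k) * (maxf_nn ^^ k) u x" for k
  have "ennreal ((1 / c) ^ k) = ennreal c * ennreal ((1 / c) ^ Suc k)" for k
    using assms by (simp add: ennreal_mult[symmetric] del: ennreal_mult)
  then have "(\<Sum>k. ennreal ((1 / c) ^ k) * (maxf_nn ^^ Suc k) u x) = (\<Sum>k. ennreal c * a (Suc k))"
    unfolding a_def by (intro suminf_cong) (metis mult.assoc)
  also have "\<dots> = ennreal c * (\<Sum>k. a (Suc k))" by (rule ennreal_suminf_cmult)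
  also have "(\<Sum>k. a (Suc k)) \<le> (\<Sum>k. a k)"
    using suminf_offset[of a 1] by (simp add: add_increasing2)
  finally show ?thesis by (simp add: a_def rubio_de_francia_def mult_left_mono)
qed

text \<open>With c = 2K, or any c > 0 when K = 0 (then M kills every iterate), the iteration is an A_1 weight.\<close>

lemma AE_maxf_nn_rubio_de_francia_le:
  assumes MK: "M_L2_norm \<sigma> = ennreal K"
    and \<sigma>m [measurable]: "\<sigma> \<in> borel_measurable lebesgue" and \<sigma>: "AE x in lebesgue. 0 < \<sigma> x"
    and u: "u \<in> borel_measurable lebesgue" and Q: "(\<integral>\<^sup>+ x. u x ^ 2 * ennreal (\<sigma> x) \<partial>lebesgue) < top"
    and c: "0 < c" "0 < K \<Longrightarrow> c = 2 * K" and K: "0 \<le> K"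
  shows "AE x in lebesgue. maxf_nn (rubio_de_francia c u) x \<le> ennreal (2 * K) * rubio_de_francia c u x"
proof (cases "K = 0")
  case True
  have "AE x in lebesgue. (maxf_nn ^^ Suc k) u x = 0" for k
  proof -
    have "(\<integral>\<^sup>+ x. (maxf_nn ^^ Suc k) u x ^ 2 * ennreal (\<sigma> x) \<partial>lebesgue) = 0"
      using maxf_nn_iterate_L2_le[OF MK \<sigma>m \<sigma> u Q, of "Suc k"] True by simp
    then have "AE x in lebesgue. (maxf_nn ^^ Suc k) u x ^ 2 * ennreal (\<sigma> x) = 0"
      by (subst (asm) nn_integral_0_iff_AE) auto
    with \<sigma> show ?thesis by eventually_elim simp
  qed
  then have "AE x in lebesgue. \<forall>k. (maxf_nn ^^ Suc k) u x = 0"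
    by (simp add: AE_all_countable)
  then show ?thesis
  proof eventually_elim
    case (elim x)
    with maxf_nn_rubio_de_francia_le[OF u, of c x] show ?case by simp
  qed
next
  case False
  with K c have "c = 2 * K" by simp
  then show ?thesis
    using order_trans[OF maxf_nn_rubio_de_francia_le[OF u] rubio_de_francia_tail_le[OF c(1)]] by simp
qed

lemma nn_integral_abs_mult_maxf_nn_iterate_le:
  fixes w f :: "real \<Rightarrow> real" and u :: "real \<Rightarrow> ennreal"
  assumes w [measurable]: "w \<in> borel_measurable lebesgue" and w0: "\<And>x. 0 \<le> w x"
    and wpos: "AE x in lebesgue. 0 < w x"
    and MK: "M_L2_norm (\<lambda>x. inverse (w x)) = ennreal K" and K: "0 \<le> K"
    and u [measurable]: "u \<in> borel_measurable lebesgue"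
    and Q: "(\<integral>\<^sup>+ x. u x ^ 2 * ennreal (inverse (w x)) \<partial>lebesgue) < top"
    and f [measurable]: "f \<in> borel_measurable lebesgue"
  shows "(\<integral>\<^sup>+ x. ennreal \<bar>f x\<bar> * (maxf_nn ^^ k) u x \<partial>lebesgue)
      \<le> ennreal (K ^ k) * (L2_norm w f * ennsqrt (\<integral>\<^sup>+ x. u x ^ 2 * ennreal (inverse (w x)) \<partial>lebesgue))"
proof -
  have wpos': "AE x in lebesgue. 0 < inverse (w x)" using wpos by eventually_elim simp
  have "(\<integral>\<^sup>+ x. ennreal \<bar>f x\<bar> * (maxf_nn ^^ k) u x \<partial>lebesgue)
      \<le> L2_norm w f * ennsqrt (\<integral>\<^sup>+ x. (maxf_nn ^^ k) u x ^ 2 * ennreal (inverse (w x)) \<partial>lebesgue)"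
    using borel_measurable_maxf_nn_iterate[OF u] w0 wpos by (intro nn_integral_abs_mult_le_L2_norm) auto
  also have "\<dots> \<le> L2_norm w f * ennsqrt ((ennreal K ^ k) ^ 2 * (\<integral>\<^sup>+ x. u x ^ 2 * ennreal (inverse (w x)) \<partial>lebesgue))"
    using maxf_nn_iterate_L2_le[OF MK _ wpos' u Q, of k]
    by (intro mult_left_mono ennsqrt_mono) (auto simp: power_mult[symmetric] mult.commute)
  also have "\<dots> = ennreal (K ^ k) * (L2_norm w f * ennsqrt (\<integral>\<^sup>+ x. u x ^ 2 * ennreal (inverse (w x)) \<partial>lebesgue))"
    using K by (simp only: ennsqrt_mult ennsqrt_of_sq ennreal_power ac_simps)
  finally show ?thesis .
qed

lemma nn_integral_rubio_de_francia_le: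
  fixes w f :: "real \<Rightarrow> real" and u :: "real \<Rightarrow> ennreal"
  assumes w [measurable]: "w \<in> borel_measurable lebesgue" and w0: "\<And>x. 0 \<le> w x"
    and wpos: "AE x in lebesgue. 0 < w x"
    and MK: "M_L2_norm (\<lambda>x. inverse (w x)) = ennreal K" and K: "0 \<le> K" and c: "0 < c" "2 * K \<le> c"
    and u [measurable]: "u \<in> borel_measurable lebesgue"
    and Q: "(\<integral>\<^sup>+ x. u x ^ 2 * ennreal (inverse (w x)) \<partial>lebesgue) < top"
    and f [measurable]: "f \<in> borel_measurable lebesgue"
  shows "(\<integral>\<^sup>+ x. ennreal \<bar>f x\<bar> * rubio_de_francia c u x \<partial>lebesgue)
      \<le> 2 * L2_norm w f * ennsqrt (\<integral>\<^sup>+ x. u x ^ 2 * ennreal (inverse (w x)) \<partial>lebesgue)"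
proof -
  define B where "B = L2_norm w f * ennsqrt (\<integral>\<^sup>+ x. u x ^ 2 * ennreal (inverse (w x)) \<partial>lebesgue)"
  note [measurable] = borel_measurable_maxf_nn_iterate[OF u]
  have summand: "ennreal ((1 / c) ^ k) * (\<integral>\<^sup>+ x. ennreal \<bar>f x\<bar> * (maxf_nn ^^ k) u x \<partial>lebesgue)
      \<le> ennreal ((1 / 2) ^ k) * B" for k
  proof -
    have "ennreal ((1 / c) ^ k) * (\<integral>\<^sup>+ x. ennreal \<bar>f x\<bar> * (maxf_nn ^^ k) u x \<partial>lebesgue)
        \<le> ennreal ((1 / c) ^ k * K ^ k) * B"
      using nn_integral_abs_mult_maxf_nn_iterate_le[OF w w0 wpos MK K u Q f, of k] K c
      by (simp add: B_def ennreal_mult mult.assoc mult_left_mono)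
    also have "(1 / c) ^ k * K ^ k \<le> (1 / 2) ^ k"
      using K c by (simp add: power_mult_distrib[symmetric] power_mono)
    finally show ?thesis by (simp add: ennreal_leI mult_right_mono)
  qed
  have "(\<integral>\<^sup>+ x. ennreal \<bar>f x\<bar> * rubio_de_francia c u x \<partial>lebesgue)
      = (\<integral>\<^sup>+ x. (\<Sum>k. ennreal ((1 / c) ^ k) * (ennreal \<bar>f x\<bar> * (maxf_nn ^^ k) u x)) \<partial>lebesgue)"
    unfolding rubio_de_francia_def
    by (simp add: ennreal_suminf_cmult[symmetric] mult.left_commute del: ennreal_suminf_cmult)
  also have "\<dots> = (\<Sum>k. ennreal ((1 / c) ^ k) * (\<integral>\<^sup>+ x. ennreal \<bar>f x\<bar> * (maxf_nn ^^ k) u x \<partial>lebesgue))"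
    by (subst nn_integral_suminf) (auto simp: nn_integral_cmult)
  also have "\<dots> \<le> (\<Sum>k. ennreal ((1 / 2) ^ k) * B)"
    by (intro suminf_le summand) auto
  also have "\<dots> = 2 * B" by (simp add: suminf_geometric_half_ennreal ennreal_suminf_multc)
  finally show ?thesis by (simp add: B_def mult.assoc)
qed

lemma rubio_de_francia_locally_finite:
  fixes w :: "real \<Rightarrow> real" and u :: "real \<Rightarrow> ennreal"
  assumes w: "is_weight w" and wpos: "AE x in lebesgue. 0 < w x"
    and MK: "M_L2_norm (\<lambda>x. inverse (w x)) = ennreal K" and K: "0 \<le> K" and c: "0 < c" "2 * K \<le> c"
    and u: "u \<in> borel_measurable lebesgue"
    and Q: "(\<integral>\<^sup>+ x. u x ^ 2 * ennreal (inverse (w x)) \<partial>lebesgue) < top"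
  shows "(\<integral>\<^sup>+ x. rubio_de_francia c u x * indicator {a..b} x \<partial>lebesgue) < top"
proof -
  have [measurable]: "w \<in> borel_measurable lebesgue" and w0: "\<And>x. 0 \<le> w x"
    using w by (auto simp: is_weight_def)
  have "(\<integral>\<^sup>+ x. rubio_de_francia c u x * indicator {a..b} x \<partial>lebesgue)
      \<le> 2 * ennsqrt (wmeas w {a..b}) * ennsqrt (\<integral>\<^sup>+ x. u x ^ 2 * ennreal (inverse (w x)) \<partial>lebesgue)"
    using nn_integral_rubio_de_francia_le[OF _ w0 wpos MK K c u Q, of "indicator {a..b}"]
    by (simp add: L2_norm_indicator[OF w0] ennreal_indicator mult.commute)
  also have "\<dots> < top"
    using wmeas_Icc_less_top[OF w, of a b] Q by (simp add: ennreal_mult_less_top)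
  finally show ?thesis .
qed

lemma weight_enn2real_of_locally_finite:
  assumes [measurable]: "h \<in> borel_measurable lebesgue"
    and fin: "\<And>a b. (\<integral>\<^sup>+ x. h x * indicator {a..b} x \<partial>lebesgue) < top"
  shows "is_weight (\<lambda>x. enn2real (h x))" and "AE x in lebesgue. ennreal (enn2real (h x)) = h x"
proof -
  have "AE x in lebesgue. h x * indicator {-real n..real n} x \<noteq> top" for n :: nat
    using fin[of "-real n" "real n"] nn_integral_PInf_AE[of "\<lambda>x. h x * indicator {-real n..real n} x" lebesgue]
    by (simp add: less_top)
  then have "AE x in lebesgue. \<forall>n::nat. h x * indicator {-real n..real n} x \<noteq> top"
    by (simp add: AE_all_countable)
  then show "AE x in lebesgue. ennreal (enn2real (h x)) = h x"
  proof eventually_elim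
    case (elim x)
    obtain n :: nat where "\<bar>x\<bar> \<le> real n" using real_arch_simple by blast
    with elim[rule_format, of n] show ?case by (simp add: ennreal_enn2real_if indicator_def abs_le_iff top.not_eq_extremum)
  qed
  have "set_integrable lebesgue {a..b} (\<lambda>x. enn2real (h x))" for a b
  proof -
    have "(\<integral>\<^sup>+ x. ennreal (norm (indicator {a..b} x *\<^sub>R enn2real (h x))) \<partial>lebesgue)
       \<le> (\<integral>\<^sup>+ x. h x * indicator {a..b} x \<partial>lebesgue)"
      by (intro nn_integral_mono) (auto simp: indicator_def ennreal_enn2real_if)
    then show ?thesis
      unfolding set_integrable_def using fin[of a b] by (subst integrable_iff_bounded) (auto intro: le_less_trans)
  qed
  then show "is_weight (\<lambda>x. enn2real (h x))" by (simp add: is_weight_def)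
qed

lemma rubio_de_francia_weight:
  fixes w :: "real \<Rightarrow> real" and u :: "real \<Rightarrow> ennreal"
  assumes w: "is_weight w" and wpos: "AE x in lebesgue. 0 < w x"
    and K: "0 \<le> K" and MK: "M_L2_norm (\<lambda>x. inverse (w x)) = ennreal K"
    and u [measurable]: "u \<in> borel_measurable lebesgue"
    and Q: "(\<integral>\<^sup>+ x. u x ^ 2 * ennreal (inverse (w x)) \<partial>lebesgue) < top"
  obtains v where "is_weight v" "A1_const v \<le> ennreal (2 * K)" "AE x in lebesgue. u x \<le> ennreal (v x)"
    "\<And>f. f \<in> borel_measurable lebesgue \<Longrightarrow>
      L1_norm v f \<le> 2 * L2_norm w f * ennsqrt (\<integral>\<^sup>+ x. u x ^ 2 * ennreal (inverse (w x)) \<partial>lebesgue)"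
proof -
  have wm [measurable]: "w \<in> borel_measurable lebesgue" and w0: "\<And>x. 0 \<le> w x"
    using w by (auto simp: is_weight_def)
  define c where "c = (if 0 < K then 2 * K else 1)"
  have c: "0 < c" "2 * K \<le> c" "0 < K \<Longrightarrow> c = 2 * K" using K by (auto simp: c_def)
  define R where "R = rubio_de_francia c u"
  have [measurable]: "R \<in> borel_measurable lebesgue" unfolding R_def by (rule borel_measurable_rubio_de_francia) simp
  note L1 = nn_integral_rubio_de_francia_le[OF wm w0 wpos MK K c(1,2) u Q, folded R_def]
  note fin = rubio_de_francia_locally_finite[OF w wpos MK K c(1,2) u Q, folded R_def]
  define v where "v x = enn2real (R x)" for x
  have v: "is_weight v" "AE x in lebesgue. ennreal (v x) = R x"
    unfolding v_def using weight_enn2real_of_locally_finite[OF _ fin] by simp_all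
  have "AE x in lebesgue. maxf v x \<le> ennreal (2 * K) * ennreal (v x)"
  proof -
    have "maxf v = maxf_nn R"
      unfolding maxf_eq_maxf_nn by (rule maxf_nn_cong_AE) (use v(2) in \<open>eventually_elim, simp add: v_def\<close>)
    moreover have "AE x in lebesgue. 0 < inverse (w x)" using wpos by eventually_elim simp
    note AE_maxf_nn_rubio_de_francia_le[OF MK _ this u Q c(1,3) K, folded R_def]
    ultimately show ?thesis using v(2) by (auto elim!: AE_mp)
  qed
  then have "A1_const v \<le> ennreal (2 * K)" unfolding A1_const_def by (intro Inf_lower) simp
  moreover have "AE x in lebesgue. u x \<le> ennreal (v x)"
    using v(2) by eventually_elim (simp add: R_def le_rubio_de_francia)
  moreover have "L1_norm v f \<le> (\<integral>\<^sup>+ x. ennreal \<bar>f x\<bar> * R x \<partial>lebesgue)" for f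
    unfolding L1_norm_def v_def
    by (intro nn_integral_mono) (auto simp: ennreal_mult ennreal_enn2real_if intro!: mult_left_mono)
  ultimately show ?thesis
    by (intro that[OF v(1)]) (auto intro: order_trans L1)
qed

lemma wmeas_le_of_measurable_subsets:
  assumes "\<And>G. G \<in> sets lebesgue \<Longrightarrow> G \<subseteq> E \<Longrightarrow> wmeas w G \<le> C"
  shows "wmeas w E \<le> C"
  unfolding wmeas_def nn_integral_def
proof (rule SUP_least, clarify)
  fix g assume g: "simple_function lebesgue g" "g \<le> (\<lambda>x. ennreal (w x) * indicator E x)"
  have [measurable]: "g \<in> borel_measurable lebesgue" by (rule borel_measurable_simple_function[OF g(1)])
  define G where "G = {x. g x \<noteq> 0}"
  have "g -` (- {0}) \<inter> space lebesgue \<in> sets lebesgue" by measurable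
  then have "G \<in> sets lebesgue" unfolding G_def by (simp add: vimage_def Collect_neg_eq)
  moreover have "G \<subseteq> E"
  proof
    fix x assume "x \<in> G"
    moreover have "g x \<le> ennreal (w x) * indicator E x" using g(2) by (simp add: le_fun_def)
    ultimately show "x \<in> E" by (cases "x \<in> E") (auto simp: G_def)
  qed
  ultimately have G: "G \<in> sets lebesgue" "G \<subseteq> E" by blast+
  have "integral\<^sup>S lebesgue g = integral\<^sup>N lebesgue g"
    by (rule nn_integral_eq_simple_integral[symmetric, OF g(1)])
  also have "\<dots> \<le> wmeas w G"
    unfolding wmeas_def
  proof (rule nn_integral_mono)
    fix x
    have "g x \<le> ennreal (w x) * indicator E x" using g(2) by (simp add: le_fun_def)
    then show "g x \<le> ennreal (w x) * indicator G x"
      using G by (cases "x \<in> G") (auto simp: G_def indicator_def)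
  qed
  also have "\<dots> \<le> C" by (rule assms[OF G])
  finally show "integral\<^sup>S lebesgue g \<le> C" .
qed

lemma wmeas_le_of_finite_subsets:
  assumes w: "is_weight w"
    and H: "\<And>G. G \<in> sets lebesgue \<Longrightarrow> G \<subseteq> E \<Longrightarrow> wmeas w G < top \<Longrightarrow> wmeas w G \<le> C"
  shows "wmeas w E \<le> C"
proof (rule wmeas_le_of_measurable_subsets)
  fix G assume G [measurable]: "G \<in> sets lebesgue" and GE: "G \<subseteq> E"
  define F where "F n x = ennreal (w x) * indicator (G \<inter> {- real n..real n}) x" for n x
  have [measurable]: "w \<in> borel_measurable lebesgue" using w by (simp add: is_weight_def)
  have [measurable]: "F n \<in> borel_measurable lebesgue" for n
    unfolding F_def by (intro borel_measurable_times_ennreal borel_measurable_indicator sets.Int) auto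
  have "incseq F"
    unfolding incseq_def F_def by (auto intro!: le_funI mult_left_mono simp: indicator_def)
  moreover have "(SUP n. F n x) = ennreal (w x) * indicator G x" for x
  proof -
    obtain n :: nat where "\<bar>x\<bar> \<le> real n" using real_arch_simple by blast
    then have "F n x = ennreal (w x) * indicator G x" by (auto simp: F_def indicator_def)
    then show ?thesis
      by (intro antisym SUP_least) (auto simp: F_def indicator_def intro: SUP_upper2[of n])
  qed
  ultimately have "wmeas w G = (SUP n. integral\<^sup>N lebesgue (F n))"
    unfolding wmeas_def by (subst nn_integral_monotone_convergence_SUP[symmetric]) simp_all
  also have "\<dots> = (SUP n. wmeas w (G \<inter> {- real n..real n}))"
    unfolding wmeas_def F_def by simp
  also have "\<dots> \<le> C"
  proof (rule SUP_least)
    fix n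
    have "wmeas w (G \<inter> {- real n..real n}) \<le> wmeas w {- real n..real n}"
      unfolding wmeas_def by (intro nn_integral_mono) (auto simp: indicator_def)
    also have "\<dots> < top" by (rule wmeas_Icc_less_top[OF w])
    finally show "wmeas w (G \<inter> {- real n..real n}) \<le> C" using GE by (intro H) auto
  qed
  finally show "wmeas w G \<le> C" .
qed

lemma weak_L2_norm_le_of_finite_subsets:
  assumes w: "is_weight w"
    and H: "\<And>\<alpha> G. 0 < \<alpha> \<Longrightarrow> G \<in> sets lebesgue \<Longrightarrow> G \<subseteq> {x. \<alpha> < \<bar>g x\<bar>} \<Longrightarrow> wmeas w G < top \<Longrightarrow>
      ennreal \<alpha> * ennsqrt (wmeas w G) \<le> B"
  shows "weak_L2_norm w g \<le> B"
  unfolding weak_L2_norm_def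
proof (rule SUP_least)
  fix \<alpha> :: real assume "\<alpha> \<in> {0<..}"
  then have \<alpha>: "0 < \<alpha>" by simp
  note iff = ennreal_mult_le_iff_le_divide[OF \<alpha>] ennsqrt_le_iff_sq
  have "wmeas w G \<le> (B / ennreal \<alpha>) ^ 2"
    if "G \<in> sets lebesgue" "G \<subseteq> {x. \<alpha> < \<bar>g x\<bar>}" "wmeas w G < top" for G
    using H[OF \<alpha> that] by (simp only: iff)
  then have "wmeas w {x. \<alpha> < \<bar>g x\<bar>} \<le> (B / ennreal \<alpha>) ^ 2"
    by (rule wmeas_le_of_finite_subsets[OF w])
  then show "ennreal \<alpha> * ennsqrt (wmeas w {x. \<alpha> < \<bar>g x\<bar>}) \<le> B"
    by (simp only: iff)
qed

section \<open>The weak-type estimate\<close>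

lemma wmeas_hilbert_superlevel_subset_le:
  fixes w f :: "real \<Rightarrow> real"
  assumes w: "is_weight w" and wpos: "AE x in lebesgue. 0 < w x"
    and MK: "M_L2_norm (\<lambda>x. inverse (w x)) = ennreal K"
    and f [measurable]: "f \<in> borel_measurable lebesgue" and Nf: "L2_norm w f < top"
    and phi: "phi_H (2 * K) < top" and \<alpha>: "0 < \<alpha>"
    and G [measurable]: "G \<in> sets lebesgue" and GE: "G \<subseteq> {x. \<alpha> < \<bar>hilbert f x\<bar>}" and Gfin: "wmeas w G < top"
  shows "ennreal \<alpha> * wmeas w G \<le> 2 * phi_H (2 * K) * L2_norm w f * ennsqrt (wmeas w G)"
proof -
  have [measurable]: "w \<in> borel_measurable lebesgue" and w0: "\<And>x. 0 \<le> w x"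
    using w by (auto simp: is_weight_def)
  define u where "u x = ennreal (w x) * indicator G x" for x
  have um [measurable]: "u \<in> borel_measurable lebesgue" unfolding u_def by measurable
  have "u x ^ 2 * ennreal (inverse (w x)) = ennreal (w x) * indicator G x" for x
    using w0[of x] by (cases "w x = 0")
      (auto simp: u_def indicator_def power2_eq_square ennreal_mult[symmetric] simp del: ennreal_mult)
  then have Qu: "(\<integral>\<^sup>+ x. u x ^ 2 * ennreal (inverse (w x)) \<partial>lebesgue) = wmeas w G"
    by (simp add: wmeas_def)
  text \<open>The hypothesis on M does not force K \<ge> 0: a negative K acts as 0.\<close>
  define K' where "K' = max 0 K"
  have K': "0 \<le> K'" "M_L2_norm (\<lambda>x. inverse (w x)) = ennreal K'" "ennreal (2 * K') = ennreal (2 * K)"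
    using MK by (simp_all add: K'_def ennreal_max_0)
      (metis ennreal_max_0 max_mult_distrib_left mult_zero_right zero_le_numeral)
  obtain v where v: "is_weight v" "A1_const v \<le> ennreal (2 * K)" "AE x in lebesgue. u x \<le> ennreal (v x)"
      and L1: "\<And>f. f \<in> borel_measurable lebesgue \<Longrightarrow> L1_norm v f \<le> 2 * L2_norm w f * ennsqrt (wmeas w G)"
    by (rule rubio_de_francia_weight[OF w wpos K'(1,2) um, unfolded Qu K'(3)]) (use Gfin in auto)
  have Hv: "H_weak11_norm v \<le> phi_H (2 * K)" by (rule H_weak11_norm_le_phi_H[OF v(1,2)])
  have "wmeas w G \<le> wmeas v {x. \<alpha> < \<bar>hilbert f x\<bar>}"
    unfolding wmeas_def using v(3) GE by (intro nn_integral_mono_AE) (auto simp: u_def indicator_def elim!: AE_mp)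
  then have "ennreal \<alpha> * wmeas w G \<le> weak_L1_norm v (hilbert f)"
    unfolding weak_L1_norm_def using \<alpha> by (intro SUP_upper2[of \<alpha>] mult_left_mono) auto
  also have "\<dots> \<le> H_weak11_norm v * L1_norm v f"
    using Hv phi L1[OF f] Nf Gfin
    by (intro weak_L1_norm_hilbert_le f) (auto simp: ennreal_mult_less_top le_less_trans)
  also have "\<dots> \<le> phi_H (2 * K) * (2 * L2_norm w f * ennsqrt (wmeas w G))"
    using Hv L1[OF f] by (intro mult_mono) auto
  finally show ?thesis by (simp add: ac_simps)
qed

theorem mainTheorem2:
  fixes w :: "real \<Rightarrow> real" and K :: real and f :: "real \<Rightarrow> real"
  assumes "is_weight w"
    and "AE x in lebesgue. w x > 0"
    and "M_L2_norm (\<lambda>x. inverse (w x)) = ennreal K"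
    and "f \<in> borel_measurable lebesgue"
    and "L2_norm w f < top"
  shows "weak_L2_norm w (hilbert f) \<le> 2 * phi_H (2 * K) * L2_norm w f"
proof (rule weak_L2_norm_le_of_finite_subsets[OF assms(1)])
  fix \<alpha> G assume \<alpha>: "0 < \<alpha>" and G: "G \<in> sets lebesgue" "G \<subseteq> {x. \<alpha> < \<bar>hilbert f x\<bar>}" "wmeas w G < top"
  consider "L2_norm w f = 0" | "L2_norm w f \<noteq> 0" "phi_H (2 * K) = top" | "phi_H (2 * K) < top"
    using top.not_eq_extremum by blast
  then show "ennreal \<alpha> * ennsqrt (wmeas w G) \<le> 2 * phi_H (2 * K) * L2_norm w f"
  proof cases
    case 1
    then have "AE x in lebesgue. f x = 0"
      using assms by (intro AE_eq_0_of_L2_norm_eq_0) (auto simp: is_weight_def)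
    then have "hilbert f = (\<lambda>x. 0)" by (auto intro: hilbert_AE_zero)
    with G \<alpha> show ?thesis by (simp add: wmeas_def)
  next
    case 2
    then show ?thesis by (simp add: ennreal_mult_eq_top_iff)
  next
    case 3
    with assms G \<alpha> show ?thesis
      by (intro ennreal_mult_ennsqrt_le wmeas_hilbert_superlevel_subset_le) auto
  qed
qed

end
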